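(* Let $\mathbf A\in\mathcal S_{++}^n$. For any $\tau>0$ and any $(\mathbf W_0,\mathbf M_0)\in\mathcal D$, there exists a unique solution $(\mathbf W(t),\mathbf M(t))$, $t\in[0,\infty)$, of the ODE $(\ast)$ with initial condition $(\mathbf W_0,\mathbf M_0)$.
   Context: Let $n>k\ge1$ be integers. $\mathcal S_{++}^m$ denotes the $m\times m$ symmetric positive definite matrices; $\mathbf A\in\mathcal S_{++}^n$, and $\mathcal D:=\mathbb R^{k\times n}\times\mathcal S_{++}^k$. For a parameter $\tau>0$, consider the ODE $(\ast)$ on $\mathcal D$: $$\tfrac12\tfrac{d\mathbf W}{dt}=\mathbf M^{-1}\mathbf W\mathbf A-\mathbf W,\qquad \tau\tfrac{d\mathbf M}{dt}=\mathbf M^{-1}\mathbf W\mathbf A\mathbf W^\top\mathbf M^{-1}-\mathbf M.$$ A solution is a continuously differentiable map $t\mapsto(\mathbf W(t),\mathbf M(t))$ from $[0,\infty)$ into $\mathcal D$ satisfying $(\ast)$; in particular, $\mathbf M(t)$ stays positive definite. *)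

theory Defs
  imports "HOL-Analysis.Analysis"
begin

definition sym_posdef :: "real^'m^'m \<Rightarrow> bool" where
  "sym_posdef A \<longleftrightarrow> transpose A = A \<and> (\<forall>x. x \<noteq> 0 \<longrightarrow> x \<bullet> (A *v x) > 0)"

definition is_solution ::
  "real \<Rightarrow> real^'n^'n \<Rightarrow> real^'n^'k \<Rightarrow> real^'k^'k
    \<Rightarrow> (real \<Rightarrow> real^'n^'k) \<Rightarrow> (real \<Rightarrow> real^'k^'k) \<Rightarrow> bool" where
  "is_solution \<tau> A W0 M0 W M \<longleftrightarrow>
     W 0 = W0 \<and> M 0 = M0 \<and>
     (\<forall>t\<ge>0. sym_posdef (M t)) \<and>
     (\<exists>W' M'.
        continuous_on {0..} W' \<and> continuous_on {0..} M' \<and>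
        (\<forall>t\<ge>0. (W has_vector_derivative W' t) (at t within {0..}) \<and>
                 (M has_vector_derivative M' t) (at t within {0..}) \<and>
                 (1/2) *\<^sub>R W' t = matrix_inv (M t) ** W t ** A - W t \<and>
                 \<tau> *\<^sub>R M' t = matrix_inv (M t) ** W t ** A ** transpose (W t) ** matrix_inv (M t) - M t))"

end

theory Submission
  imports Defs
begin

text \<open>
  Along a solution, \<open>\<tau> (v\<^sup>T M v)' = v\<^sup>T M\<^sup>-\<^sup>1 W A W\<^sup>T M\<^sup>-\<^sup>1 v - v\<^sup>T M v \<ge> - v\<^sup>T M v\<close>, so \<open>M(t) \<ge> e\<^sup>-\<^sup>t\<^sup>/\<^sup>\<tau> M(0)\<close>
  stays uniformly positive definite on bounded time intervals. This bounds \<open>M\<^sup>-\<^sup>1\<close>, hence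
  \<open>|W|\<close> grows at most exponentially and \<open>|M|\<^sup>2\<close> at most linearly (Gronwall). On the region cut
  out by these bounds, enlarged by a margin, the vector field is Lipschitz; composing it with the
  projection onto this closed convex region gives a globally Lipschitz field, whose Picard solution
  cannot leave the region because the a priori bounds hold strictly inside it. So it solves the
  original system on \<open>[0, T]\<close>, uniqueness follows from Gronwall's inequality on the region, and
  the solutions for growing \<open>T\<close> fit together into the global one.
\<close>

section \<open>The Frobenius norm of matrices\<close>

lemma norm_vec_sq: "norm (x::real^'n) ^ 2 = (\<Sum>i\<in>UNIV. (x$i)^2)"
  by (simp add: norm_vec_def L2_set_def sum_nonneg)

lemma norm_matrix_sq: "norm (A::real^'n^'m) ^ 2 = (\<Sum>i\<in>UNIV. norm (A$i) ^ 2)"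
  by (simp add: norm_vec_def L2_set_def sum_nonneg)

lemma norm_matrix_vector_mult_le: "norm ((A::real^'n^'m) *v x) \<le> norm A * norm x"
proof -
  have "norm (A *v x) ^ 2 = (\<Sum>i\<in>UNIV. (A$i \<bullet> x)^2)"
    by (simp add: norm_vec_sq matrix_vector_mul_component)
  also have "\<dots> \<le> (\<Sum>i\<in>UNIV. (norm (A$i) * norm x)^2)"
    by (intro sum_mono) (simp add: abs_le_square_iff[symmetric] abs_mult Cauchy_Schwarz_ineq2)
  also have "\<dots> = (norm A * norm x)^2"
    by (simp add: norm_matrix_sq power_mult_distrib sum_distrib_right)
  finally show ?thesis
    by (rule power2_le_imp_le) simp
qed

lemma norm_transpose: "norm (transpose (A::real^'n^'m)) = norm A"
proof -
  have "norm (transpose A) ^ 2 = norm A ^ 2"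
    unfolding norm_matrix_sq norm_vec_sq transpose_def by (simp, rule sum.swap)
  thus ?thesis by (simp add: power2_eq_iff_nonneg)
qed

lemma norm_matrix_mult_le: "norm ((A::real^'n^'m) ** (B::real^'p^'n)) \<le> norm A * norm B"
proof -
  have row: "(A ** B) $ i = transpose B *v (A $ i)" for i
    by (simp add: matrix_matrix_mult_def matrix_vector_mult_def transpose_def vec_eq_iff mult.commute)
  have "norm (A ** B) ^ 2 = (\<Sum>i\<in>UNIV. norm (transpose B *v (A $ i)) ^ 2)"
    by (simp add: norm_matrix_sq row)
  also have "\<dots> \<le> (\<Sum>i\<in>UNIV. (norm B * norm (A$i)) ^ 2)"
    using norm_matrix_vector_mult_le[of "transpose B"]
    unfolding norm_transpose by (intro sum_mono power_mono) auto
  also have "\<dots> = norm B ^ 2 * (\<Sum>i\<in>UNIV. norm (A$i) ^ 2)"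
    by (simp add: power_mult_distrib sum_distrib_left)
  also have "\<dots> = (norm A * norm B)^2"
    by (simp add: norm_matrix_sq[of A, symmetric] power_mult_distrib)
  finally show ?thesis
    by (rule power2_le_imp_le) simp
qed

lemma quadratic_form_abs_le: "\<bar>v \<bullet> ((M::real^'n^'n) *v v)\<bar> \<le> norm M * norm v ^ 2"
proof -
  have "\<bar>v \<bullet> (M *v v)\<bar> \<le> norm v * norm (M *v v)" by (rule Cauchy_Schwarz_ineq2)
  also have "\<dots> \<le> norm v * (norm M * norm v)"
    by (intro mult_left_mono norm_matrix_vector_mult_le) auto
  finally show ?thesis by (simp add: power2_eq_square ac_simps)
qed

lemma norm_sandwich_le:
  fixes P :: "real^'k^'k" and W :: "real^'n^'k" and A :: "real^'n^'n"
  shows "norm (P ** W ** A ** transpose W ** P) \<le> norm P ^ 2 * norm W ^ 2 * norm A"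
proof -
  have "norm (P ** W ** A ** transpose W ** P) \<le> norm P * norm W * norm A * norm (transpose W) * norm P"
    by (meson norm_matrix_mult_le mult_right_mono norm_ge_zero order_trans)
  thus ?thesis by (simp add: norm_transpose power2_eq_square ac_simps)
qed

lemma matrix_diff_ldistrib: "(A::'a::ring_1^'n^'m) ** (B - C) = A ** B - A ** C"
  by (simp add: matrix_matrix_mult_def vec_eq_iff sum_subtractf[symmetric] right_diff_distrib)

lemma matrix_diff_rdistrib: "((B::'a::ring_1^'n^'m) - C) ** A = B ** A - C ** A"
  by (simp add: matrix_matrix_mult_def vec_eq_iff sum_subtractf[symmetric] left_diff_distrib)

lemma transpose_add: "transpose (A + B) = transpose A + transpose (B::real^'n^'m)"
  by (simp add: transpose_def vec_eq_iff)

lemma transpose_diff: "transpose (A - B) = transpose A - transpose (B::real^'n^'m)"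
  by (simp add: transpose_def vec_eq_iff)

lemma bounded_linear_transpose: "bounded_linear (transpose :: real^'n^'m \<Rightarrow> real^'m^'n)"
  by (simp add: linear_conv_bounded_linear[symmetric] linearI transpose_add transpose_scalar)

lemma bounded_linear_quadratic_form: "bounded_linear (\<lambda>M::real^'n^'n. v \<bullet> (M *v v))"
  by (simp add: linear_conv_bounded_linear[symmetric] linearI matrix_vector_mult_add_rdistrib
      inner_add_right scaleR_matrix_vector_assoc[symmetric])

lemma lipschitz_on_matrix_mult:
  fixes f :: "'a::heine_borel \<Rightarrow> real^'n^'m" and g :: "'a \<Rightarrow> real^'p^'n"
  assumes U: "bounded U" and f: "Lf-lipschitz_on U f" and g: "Lg-lipschitz_on U g"
  shows "\<exists>L. L-lipschitz_on U (\<lambda>x. f x ** g x)"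
proof -
  have "bounded (f ` U)" "bounded (g ` U)"
    using bounded_uniformly_continuous_image[OF lipschitz_on_uniformly_continuous U] f g by blast+
  then obtain Bf Bg where "Bf > 0" "Bg > 0"
    and Bf: "\<And>x. x \<in> U \<Longrightarrow> norm (f x) \<le> Bf" and Bg: "\<And>x. x \<in> U \<Longrightarrow> norm (g x) \<le> Bg"
    unfolding bounded_pos by blast
  have "(Lf * Bg + Bf * Lg)-lipschitz_on U (\<lambda>x. f x ** g x)"
  proof (rule lipschitz_onI)
    fix x y assume xy: "x \<in> U" "y \<in> U"
    have "f x ** g x - f y ** g y = (f x - f y) ** g x + f y ** (g x - g y)"
      by (simp add: matrix_diff_ldistrib matrix_diff_rdistrib)
    hence "dist (f x ** g x) (f y ** g y) \<le> norm ((f x - f y) ** g x) + norm (f y ** (g x - g y))"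
      by (simp add: dist_norm norm_triangle_ineq)
    also have "\<dots> \<le> norm (f x - f y) * norm (g x) + norm (f y) * norm (g x - g y)"
      by (intro add_mono norm_matrix_mult_le)
    also have "\<dots> \<le> (Lf * dist x y) * Bg + Bf * (Lg * dist x y)"
    proof (intro add_mono mult_mono)
      show "norm (f x - f y) \<le> Lf * dist x y" "norm (g x - g y) \<le> Lg * dist x y"
        using lipschitz_onD[OF f xy] lipschitz_onD[OF g xy] by (simp_all add: dist_norm)
    qed (use Bf Bg xy \<open>Bf > 0\<close> lipschitz_on_nonneg[OF f] in auto)
    finally show "dist (f x ** g x) (f y ** g y) \<le> (Lf * Bg + Bf * Lg) * dist x y"
      by (simp add: algebra_simps)
  qed (use \<open>Bf > 0\<close> \<open>Bg > 0\<close> lipschitz_on_nonneg[OF f] lipschitz_on_nonneg[OF g] in auto)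
  thus ?thesis ..
qed

section \<open>Uniformly positive definite matrices\<close>

definition sym_coercive :: "real \<Rightarrow> real^'k^'k \<Rightarrow> bool" where
  "sym_coercive c M \<longleftrightarrow> transpose M = M \<and> (\<forall>v. c * norm v ^ 2 \<le> v \<bullet> (M *v v))"

lemma sym_coercive_imp_sym_posdef: "c > 0 \<Longrightarrow> sym_coercive c M \<Longrightarrow> sym_posdef M"
  unfolding sym_coercive_def sym_posdef_def by (smt (verit) zero_less_norm_iff zero_less_power mult_pos_pos)

lemma sym_coercive_mono: "c' \<le> c \<Longrightarrow> sym_coercive c M \<Longrightarrow> sym_coercive c' M"
  unfolding sym_coercive_def by (meson mult_right_mono order_trans zero_le_power2)

lemma sym_posdef_imp_sym_coercive:
  fixes M :: "real^'k^'k"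
  assumes "sym_posdef M"
  shows "\<exists>c>0. sym_coercive c M"
proof -
  have "sphere (0::real^'k) 1 \<noteq> {}"
    using norm_axis_1 by (metis mem_sphere_0 empty_iff)
  moreover have "continuous_on (sphere 0 1) (\<lambda>v::real^'k. v \<bullet> (M *v v))"
    by (intro continuous_on_inner continuous_on_id matrix_vector_mult_linear_continuous_on)
  ultimately obtain v0 where v0: "v0 \<in> sphere 0 1"
    and min: "\<And>y. y \<in> sphere 0 1 \<Longrightarrow> v0 \<bullet> (M *v v0) \<le> y \<bullet> (M *v y)"
    using continuous_attains_inf[OF compact_sphere] by blast
  define c where "c = v0 \<bullet> (M *v v0)"
  have "v0 \<noteq> 0" using v0 by auto
  hence "c > 0" using assms unfolding sym_posdef_def c_def by blast
  have "c * norm v ^ 2 \<le> v \<bullet> (M *v v)" for v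
  proof (cases "v = 0")
    case False
    have "c \<le> (v /\<^sub>R norm v) \<bullet> (M *v (v /\<^sub>R norm v))"
      unfolding c_def using False by (intro min) auto
    also have "\<dots> = v \<bullet> (M *v v) / norm v ^ 2"
      by (simp add: matrix_vector_mult_scaleR power2_eq_square divide_inverse)
    finally show ?thesis using False by (simp add: field_simps)
  qed simp
  thus ?thesis using \<open>c > 0\<close> assms unfolding sym_coercive_def sym_posdef_def by auto
qed

lemma sym_coercive_matrix_inv:
  fixes M :: "real^'k^'k"
  assumes "c > 0" "sym_coercive c M"
  shows "M ** matrix_inv M = mat 1" "matrix_inv M ** M = mat 1"
proof -
  have "x = 0" if "M *v x = 0" for x
  proof -
    have "c * norm x ^ 2 \<le> 0" using assms(2) that unfolding sym_coercive_def by (metis inner_zero_right)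
    thus "x = 0" using assms(1) by (simp add: mult_le_0_iff)
  qed
  hence "invertible M" using matrix_left_invertible_ker invertible_left_inverse by blast
  hence "M ** matrix_inv M = mat 1 \<and> matrix_inv M ** M = mat 1"
    unfolding matrix_inv_def invertible_def by (rule someI_ex)
  thus "M ** matrix_inv M = mat 1" "matrix_inv M ** M = mat 1" by auto
qed

lemma sym_coercive_transpose_matrix_inv:
  fixes M :: "real^'k^'k"
  assumes "c > 0" "sym_coercive c M"
  shows "transpose (matrix_inv M) = matrix_inv M"
proof -
  note inv = sym_coercive_matrix_inv[OF assms]
  have "transpose (matrix_inv M) ** M = mat 1"
    using inv(1) assms(2) unfolding sym_coercive_def by (metis matrix_transpose_mul transpose_mat)
  hence "transpose (matrix_inv M) = transpose (matrix_inv M) ** (M ** matrix_inv M)"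
    by (simp add: inv(1))
  also have "\<dots> = matrix_inv M"
    by (simp add: matrix_mul_assoc \<open>transpose (matrix_inv M) ** M = mat 1\<close>)
  finally show ?thesis .
qed

lemma sym_posdef_transpose_matrix_inv:
  "sym_posdef M \<Longrightarrow> transpose (matrix_inv M) = matrix_inv M"
  using sym_posdef_imp_sym_coercive sym_coercive_transpose_matrix_inv by metis

lemma norm_matrix_inv_vector_le:
  fixes M :: "real^'k^'k"
  assumes "c > 0" "sym_coercive c M"
  shows "norm (matrix_inv M *v v) \<le> norm v / c"
proof -
  define y where "y = matrix_inv M *v v"
  have "M *v y = v"
    unfolding y_def using sym_coercive_matrix_inv(1)[OF assms] by (simp add: matrix_vector_mul_assoc)
  hence "c * norm y ^ 2 \<le> y \<bullet> v" using assms(2) unfolding sym_coercive_def by metis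
  also have "\<dots> \<le> norm y * norm v" by (rule norm_cauchy_schwarz)
  finally have "c * norm y \<le> norm v"
    by (cases "y = 0") (auto simp: power2_eq_square)
  thus ?thesis using assms(1) by (simp add: y_def field_simps)
qed

lemma norm_matrix_inv_le:
  fixes M :: "real^'k^'k"
  assumes "c > 0" "sym_coercive c M"
  shows "norm (matrix_inv M) \<le> sqrt CARD('k) / c"
proof -
  let ?P = "matrix_inv M"
  have row: "?P $ i = ?P *v axis i 1" for i
  proof -
    have "?P $ i = transpose ?P *v axis i 1"
      by (simp add: vector_matrix_mult_def axis_def vec_eq_iff if_distrib if_distribR cong: if_cong)
    thus ?thesis using sym_coercive_transpose_matrix_inv[OF assms] by simp
  qed
  have "norm ?P ^ 2 = (\<Sum>i\<in>UNIV. norm (?P *v axis i 1) ^ 2)"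
    by (simp add: norm_matrix_sq row)
  also have "\<dots> \<le> (\<Sum>i\<in>(UNIV::'k set). (1 / c) ^ 2)"
  proof (intro sum_mono power_mono)
    fix i :: 'k
    show "norm (?P *v axis i 1) \<le> 1 / c"
      using norm_matrix_inv_vector_le[OF assms, of "axis i 1"] by (simp add: norm_axis_1)
  qed simp
  also have "\<dots> = (sqrt CARD('k) / c) ^ 2"
    by (simp add: power_divide)
  finally show ?thesis
    by (rule power2_le_imp_le) (use assms in auto)
qed

lemma lipschitz_on_matrix_inv:
  assumes "c > 0"
  shows "((sqrt CARD('k) / c)^2)-lipschitz_on {M::real^'k^'k. sym_coercive c M} matrix_inv"
proof (rule lipschitz_onI)
  fix M1 M2 :: "real^'k^'k" assume "M1 \<in> {M. sym_coercive c M}" "M2 \<in> {M. sym_coercive c M}"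
  hence M: "sym_coercive c M1" "sym_coercive c M2" by auto
  let ?p = "sqrt CARD('k) / c"
  note inv1 = sym_coercive_matrix_inv[OF assms M(1)] and inv2 = sym_coercive_matrix_inv[OF assms M(2)]
  have "matrix_inv M1 ** (M2 - M1) ** matrix_inv M2
      = matrix_inv M1 ** (M2 ** matrix_inv M2) - (matrix_inv M1 ** M1) ** matrix_inv M2"
    by (simp add: matrix_diff_ldistrib matrix_diff_rdistrib matrix_mul_assoc)
  also have "\<dots> = matrix_inv M1 - matrix_inv M2"
    by (simp add: inv1 inv2)
  finally have "dist (matrix_inv M1) (matrix_inv M2) = norm (matrix_inv M1 ** (M2 - M1) ** matrix_inv M2)"
    by (simp add: dist_norm)
  also have "\<dots> \<le> norm (matrix_inv M1) * norm (M2 - M1) * norm (matrix_inv M2)"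
    by (meson norm_matrix_mult_le mult_right_mono norm_ge_zero order_trans)
  also have "\<dots> \<le> ?p * dist M1 M2 * ?p"
    using norm_matrix_inv_le[OF assms M(1)] norm_matrix_inv_le[OF assms M(2)]
    by (intro mult_mono) (use assms in \<open>auto simp: dist_norm norm_minus_commute\<close>)
  finally show "dist (matrix_inv M1) (matrix_inv M2) \<le> ?p^2 * dist M1 M2"
    by (simp add: power2_eq_square ac_simps)
qed simp

lemma closed_sym_coercive: "closed {M::real^'k^'k. sym_coercive c M}"
  unfolding sym_coercive_def Collect_conj_eq Collect_all_eq
  by (intro closed_Inter closed_Int ballI closed_Collect_eq closed_Collect_le
      linear_continuous_on bounded_linear_transpose bounded_linear_quadratic_form continuous_intros) auto

lemma convex_sym_coercive: "convex {M::real^'k^'k. sym_coercive c M}"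
proof (rule convexI)
  fix M N :: "real^'k^'k" and u v :: real
  assume MN: "M \<in> {M. sym_coercive c M}" "N \<in> {M. sym_coercive c M}" and uv: "0 \<le> u" "0 \<le> v" "u + v = 1"
  have "c * norm w ^ 2 \<le> w \<bullet> ((u *\<^sub>R M + v *\<^sub>R N) *v w)" for w
  proof -
    have "c * norm w ^ 2 = u * (c * norm w ^ 2) + v * (c * norm w ^ 2)"
      using uv(3) by (metis distrib_right mult_1)
    also have "\<dots> \<le> u * (w \<bullet> (M *v w)) + v * (w \<bullet> (N *v w))"
      using MN uv by (intro add_mono mult_left_mono) (auto simp: sym_coercive_def)
    also have "\<dots> = w \<bullet> ((u *\<^sub>R M + v *\<^sub>R N) *v w)"
      by (simp add: matrix_vector_mult_add_rdistrib inner_add_right scaleR_matrix_vector_assoc[symmetric])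
    finally show ?thesis .
  qed
  with MN show "u *\<^sub>R M + v *\<^sub>R N \<in> {M. sym_coercive c M}"
    by (simp add: sym_coercive_def transpose_add transpose_scalar)
qed

lemma sym_coercive_perturb:
  fixes M N :: "real^'k^'k"
  assumes "sym_coercive c M" "transpose N = N" "norm (N - M) \<le> c / 2"
  shows "sym_coercive (c / 2) N"
  unfolding sym_coercive_def
proof (intro conjI allI)
  fix w :: "real^'k"
  have "\<bar>w \<bullet> ((N - M) *v w)\<bar> \<le> norm (N - M) * norm w ^ 2"
    by (rule quadratic_form_abs_le)
  also have "\<dots> \<le> c / 2 * norm w ^ 2"
    using assms(3) by (rule mult_right_mono) simp
  finally have "- (c / 2 * norm w ^ 2) \<le> w \<bullet> ((N - M) *v w)"
    by linarith
  moreover have "w \<bullet> (N *v w) = w \<bullet> (M *v w) + w \<bullet> ((N - M) *v w)"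
    by (simp add: matrix_vector_mult_diff_rdistrib inner_diff_right)
  moreover have "c * norm w ^ 2 \<le> w \<bullet> (M *v w)"
    using assms(1) unfolding sym_coercive_def by blast
  ultimately show "c / 2 * norm w ^ 2 \<le> w \<bullet> (N *v w)"
    by linarith
qed (rule assms(2))

lemma quadratic_form_congruence_nonneg:
  fixes A :: "real^'n^'n" and B :: "real^'n^'k"
  assumes "sym_posdef A"
  shows "0 \<le> v \<bullet> ((B ** A ** transpose B) *v v)"
proof -
  define y where "y = transpose B *v v"
  have "(B ** A ** transpose B) *v v = B *v (A *v y)"
    by (simp add: y_def matrix_vector_mul_assoc matrix_mul_assoc del: transpose_matrix_vector)
  hence "v \<bullet> ((B ** A ** transpose B) *v v) = y \<bullet> (A *v y)"
    by (metis dot_lmul_matrix transpose_matrix_vector y_def)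
  also have "0 \<le> y \<bullet> (A *v y)"
    using assms unfolding sym_posdef_def by (cases "y = 0") (auto intro: less_imp_le)
  finally show ?thesis .
qed

section \<open>Differential inequalities and existence for Lipschitz fields\<close>

lemma nonpos_derivative_imp_le:
  fixes f :: "real \<Rightarrow> real"
  assumes "a \<le> b"
    and "\<And>s. s \<in> {a..b} \<Longrightarrow> (f has_real_derivative f' s) (at s within {a..b})"
    and "\<And>s. s \<in> {a..b} \<Longrightarrow> f' s \<le> 0"
  shows "f b \<le> f a"
proof -
  obtain x where x: "x \<in> {a..b}" "f b - f a = f' x * (b - a)"
    using mvt_very_simple[of a b f "\<lambda>s. (*) (f' s)"] assms(1,2)
    by (auto simp: has_field_derivative_def)
  have "f' x * (b - a) \<le> 0"
    using assms(1) assms(3)[OF x(1)] by (simp add: mult_nonpos_nonneg)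
  thus ?thesis using x(2) by simp
qed

lemma gronwall_exp_bound:
  fixes f :: "real \<Rightarrow> real"
  assumes "0 \<le> t"
    and f': "\<And>s. s \<in> {0..t} \<Longrightarrow> (f has_real_derivative f' s) (at s within {0..t})"
    and growth: "\<And>s. s \<in> {0..t} \<Longrightarrow> f' s \<le> a * f s"
  shows "f t \<le> exp (a * t) * f 0"
proof -
  define h where "h s = exp (- a * s) * f s" for s
  have h': "(h has_real_derivative exp (- a * s) * (f' s - a * f s)) (at s within {0..t})"
    if "s \<in> {0..t}" for s
  proof -
    have "(h has_real_derivative exp (- a * s) * (- a) * f s + f' s * exp (- a * s)) (at s within {0..t})"
      unfolding h_def by (intro DERIV_mult f'[OF that]) (auto intro!: derivative_eq_intros)
    thus ?thesis by (rule DERIV_cong) (simp add: algebra_simps)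
  qed
  have h'_nonpos: "exp (- a * s) * (f' s - a * f s) \<le> 0" if "s \<in> {0..t}" for s
    using growth[OF that] by (simp add: mult_nonneg_nonpos)
  have "h t \<le> h 0"
    using assms(1) h' h'_nonpos by (rule nonpos_derivative_imp_le)
  hence "exp (- a * t) * f t \<le> f 0" by (simp add: h_def)
  hence "exp (a * t) * (exp (- a * t) * f t) \<le> exp (a * t) * f 0" by simp
  thus ?thesis by (simp add: mult.assoc[symmetric] exp_add[symmetric])
qed

lemma has_real_derivative_norm_sq:
  assumes "(x has_vector_derivative x') (at t within S)"
  shows "((\<lambda>s. norm (x s) ^ 2) has_real_derivative 2 * (x t \<bullet> x')) (at t within S)"
proof -
  have "((\<lambda>s. x s \<bullet> x s) has_vector_derivative (x t \<bullet> x' + x' \<bullet> x t)) (at t within S)"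
    by (rule bounded_bilinear.has_vector_derivative[OF bounded_bilinear_inner assms assms])
  thus ?thesis
    by (simp add: has_real_derivative_iff_has_vector_derivative power2_norm_eq_inner inner_commute)
qed

lemma symmetric_if_derivative_symmetric:
  fixes M :: "real \<Rightarrow> real^'k^'k"
  assumes "t \<in> {0..T}"
    and M': "\<And>s. s \<in> {0..T} \<Longrightarrow> (M has_vector_derivative M' s) (at s within {0..T})"
    and "\<And>s. s \<in> {0..T} \<Longrightarrow> transpose (M' s) = M' s"
    and "transpose (M 0) = M 0"
  shows "transpose (M t) = M t"
proof -
  define \<phi> where "\<phi> s = transpose (M s) - M s" for s
  have "(\<phi> has_derivative (\<lambda>_. 0)) (at s within {0..T})" if s: "s \<in> {0..T}" for s
  proof -
    have "(\<phi> has_vector_derivative transpose (M' s) - M' s) (at s within {0..T})"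
      unfolding \<phi>_def
      by (intro has_vector_derivative_diff M'[OF s] bounded_linear.has_vector_derivative[OF bounded_linear_transpose])
    thus ?thesis using assms(3)[OF s] by (simp add: has_vector_derivative_def)
  qed
  then obtain k where "\<forall>s\<in>{0..T}. \<phi> s = k"
    using has_derivative_zero_constant[of "{0..T}" \<phi>] by auto
  hence "\<phi> t = \<phi> 0" using assms(1) by auto
  thus ?thesis using assms(4) by (simp add: \<phi>_def)
qed

lemma integral_equation_imp_has_vector_derivative:
  fixes G :: "'a::euclidean_space \<Rightarrow> 'a"
  assumes "continuous_on UNIV G" "continuous_on {0..T} f" "t \<in> {0..T}"
    and f: "\<And>s. s \<in> {0..T} \<Longrightarrow> f s = x0 + integral {0..s} (\<lambda>u. G (f u))"
  shows "(f has_vector_derivative G (f t)) (at t within {0..T})"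
proof -
  have "continuous_on {0..T} (\<lambda>s. G (f s))"
    using assms(1,2) by (rule continuous_on_compose2) auto
  hence "((\<lambda>s. x0 + integral {0..s} (\<lambda>u. G (f u))) has_vector_derivative G (f t)) (at t within {0..T})"
    using integral_has_vector_derivative[OF _ assms(3)] by (auto intro!: derivative_eq_intros)
  thus ?thesis
    by (rule has_vector_derivative_transform[OF assms(3) f, rotated]) (simp add: f)
qed

lemma has_integral_exp_scaled:
  fixes c g :: real
  assumes "g > 0" "0 \<le> u"
  shows "((\<lambda>s. c * exp (g * s)) has_integral c * (exp (g * u) - 1) / g) {0..u}"
proof -
  have "((\<lambda>s. c * exp (g * s)) has_integral (c * exp (g * u) / g - c * exp (g * 0) / g)) {0..u}"
    by (rule fundamental_theorem_of_calculus)
      (use assms in \<open>auto intro!: derivative_eq_intros simp flip: has_real_derivative_iff_has_vector_derivative\<close>)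
  thus ?thesis by (simp add: diff_divide_distrib right_diff_distrib)
qed

lemma exp_weighted_integral_diff_le:
  fixes G :: "'a::euclidean_space \<Rightarrow> 'a"
  assumes lip: "L-lipschitz_on UNIV G" and g: "g = 2 * L + 1" and "0 \<le> u"
    and cont: "continuous_on {0..u} h1" "continuous_on {0..u} h2"
    and close: "\<And>s. s \<in> {0..u} \<Longrightarrow> dist (h1 s) (h2 s) \<le> D"
  shows "exp (- g * u) * norm (integral {0..u} (\<lambda>s. G (exp (g * s) *\<^sub>R h1 s))
           - integral {0..u} (\<lambda>s. G (exp (g * s) *\<^sub>R h2 s))) \<le> D / 2"
proof -
  have "L \<ge> 0" "g > 0" using lipschitz_on_nonneg[OF lip] g by auto
  have "dist (h1 0) (h2 0) \<le> D" using close \<open>0 \<le> u\<close> by simp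
  hence "D \<ge> 0" using zero_le_dist[of "h1 0" "h2 0"] by linarith
  define k where "k h s = G (exp (g * s) *\<^sub>R h s)" for h :: "real \<Rightarrow> 'a" and s
  have int: "k h integrable_on {0..u}" if "continuous_on {0..u} h" for h
  proof -
    have "continuous_on {0..u} (\<lambda>s. exp (g * s) *\<^sub>R h s)"
      using that by (intro continuous_intros)
    hence "continuous_on {0..u} (k h)"
      unfolding k_def by (rule continuous_on_compose2[OF lipschitz_on_continuous_on[OF lip]]) auto
    thus ?thesis by (rule integrable_continuous_real)
  qed
  have "norm (k h1 s - k h2 s) \<le> L * D * exp (g * s)" if "s \<in> {0..u}" for s
  proof -
    have "norm (k h1 s - k h2 s) \<le> L * dist (exp (g * s) *\<^sub>R h1 s) (exp (g * s) *\<^sub>R h2 s)"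
      unfolding k_def using lipschitz_onD[OF lip] by (simp add: dist_norm)
    also have "\<dots> = L * (exp (g * s) * dist (h1 s) (h2 s))"
      by (simp add: dist_norm flip: scaleR_diff_right)
    also have "\<dots> \<le> L * (exp (g * s) * D)"
      using close[OF that] \<open>L \<ge> 0\<close> by (intro mult_left_mono) auto
    finally show ?thesis by (simp add: ac_simps)
  qed
  hence "norm (integral {0..u} (k h1) - integral {0..u} (k h2)) \<le> integral {0..u} (\<lambda>s. L * D * exp (g * s))"
    unfolding integral_diff[OF int[OF cont(1)] int[OF cont(2)], symmetric]
    by (intro integral_norm_bound_integral integrable_diff int cont)
      (auto intro!: integrable_continuous_real continuous_intros)
  also have "\<dots> = L * D * (exp (g * u) - 1) / g"
    by (rule integral_unique[OF has_integral_exp_scaled[OF \<open>g > 0\<close> \<open>0 \<le> u\<close>]])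
  finally have "exp (- g * u) * norm (integral {0..u} (k h1) - integral {0..u} (k h2))
      \<le> exp (- g * u) * (L * D * (exp (g * u) - 1) / g)"
    by (intro mult_left_mono) auto
  also have "\<dots> = (L / g) * D * (1 - exp (- g * u))"
    using \<open>g > 0\<close> by (simp add: field_simps exp_minus exp_add[symmetric])
  also have "\<dots> \<le> (1 / 2) * D * 1"
  proof (intro mult_mono)
    show "L / g \<le> 1 / 2" using g \<open>L \<ge> 0\<close> by (simp add: field_simps)
    show "0 \<le> 1 - exp (- g * u)" using \<open>g > 0\<close> \<open>0 \<le> u\<close> by simp
  qed (use \<open>D \<ge> 0\<close> in auto)
  finally show ?thesis by (simp add: k_def[abs_def])
qed

lemma clamped_weighted_integral_bcontfun:
  fixes k :: "real \<Rightarrow> 'a::euclidean_space"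
  assumes k: "continuous_on UNIV k" "\<And>s. norm (k s) \<le> B" and "0 \<le> T" "0 \<le> g"
  shows "(\<lambda>t. exp (- g * max 0 (min T t)) *\<^sub>R (x0 + integral {0..max 0 (min T t)} k)) \<in> bcontfun"
proof (rule bcontfun_normI)
  define c where "c t = max 0 (min T t)" for t :: real
  have c: "c t \<in> {0..T}" for t
    using \<open>0 \<le> T\<close> by (auto simp: c_def)
  have "continuous_on {0..T} (\<lambda>u. integral {0..u} k)"
    by (rule indefinite_integral_continuous_1[OF integrable_continuous_real[OF continuous_on_subset[OF k(1)]]]) simp
  hence "continuous_on UNIV (\<lambda>t. integral {0..c t} k)"
    by (rule continuous_on_compose2) (use \<open>0 \<le> T\<close> in \<open>auto simp: c_def intro!: continuous_intros\<close>)
  thus "continuous_on UNIV (\<lambda>t. exp (- g * max 0 (min T t)) *\<^sub>R (x0 + integral {0..max 0 (min T t)} k))"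
    unfolding c_def by (intro continuous_intros)
  fix t
  have "norm (integral {0..c t} k) \<le> B * (c t - 0)"
    by (rule integral_bound) (use c k in \<open>auto intro: continuous_on_subset\<close>)
  also have "\<dots> \<le> B * T"
    using c[of t] order_trans[OF norm_ge_zero k(2)] by (intro mult_left_mono) auto
  finally have "norm (x0 + integral {0..c t} k) \<le> norm x0 + B * T"
    by (meson add_left_mono norm_triangle_le)
  moreover have "exp (- g * c t) \<le> 1"
    using c[of t] \<open>0 \<le> g\<close> by (auto simp: mult_nonpos_nonneg)
  ultimately have "exp (- g * c t) * norm (x0 + integral {0..c t} k) \<le> 1 * (norm x0 + B * T)"
    by (intro mult_mono) auto
  thus "norm (exp (- g * max 0 (min T t)) *\<^sub>R (x0 + integral {0..max 0 (min T t)} k)) \<le> norm x0 + B * T"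
    by (simp add: c_def)
qed

lemma lipschitz_integral_equation_solvable:
  fixes G :: "'a::euclidean_space \<Rightarrow> 'a" and T :: real
  assumes lip: "L-lipschitz_on UNIV G" and "bounded (range G)" and "0 \<le> T"
  shows "\<exists>f. continuous_on UNIV f \<and> (\<forall>t\<in>{0..T}. f t = x0 + integral {0..t} (\<lambda>s. G (f s)))"
proof -
  \<comment> \<open>Bielecki's trick: writing \<open>f t = exp (g * t) *\<^sub>R h t\<close> with \<open>g = 2 * L + 1\<close>, the Picard
    operator becomes a contraction on bounded continuous \<open>h\<close>; time is clamped to \<open>[0, T]\<close>.\<close>
  define g where "g = 2 * L + 1"
  have "0 \<le> g" using lipschitz_on_nonneg[OF lip] by (simp add: g_def)
  obtain B where B: "\<And>x. norm (G x) \<le> B" using assms(2) by (auto simp: bounded_iff)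
  have contG: "continuous_on S G" for S
    by (rule lipschitz_on_continuous_on[OF lipschitz_on_subset[OF lip]]) auto
  define c where "c t = max 0 (min T t)" for t :: real
  have c: "c t \<in> {0..T}" "t \<in> {0..T} \<Longrightarrow> c t = t" for t
    using \<open>0 \<le> T\<close> by (auto simp: c_def)
  define k where "k h s = G (exp (g * s) *\<^sub>R apply_bcontfun h s)" for h :: "real \<Rightarrow>\<^sub>C 'a" and s
  define P where "P h t = exp (- g * c t) *\<^sub>R (x0 + integral {0..c t} (k h))" for h t
  have "continuous_on UNIV (k h)" "norm (k h s) \<le> B" for h s
    unfolding k_def by (auto simp: B intro!: continuous_on_compose2[OF contG] continuous_intros)
  hence "P h \<in> bcontfun" for h
    unfolding P_def c_def using \<open>0 \<le> T\<close> \<open>0 \<le> g\<close> by (rule clamped_weighted_integral_bcontfun)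
  define \<Psi> where "\<Psi> h = Bcontfun (P h)" for h
  have \<Psi>: "apply_bcontfun (\<Psi> h) = P h" for h
    unfolding \<Psi>_def using \<open>P h \<in> bcontfun\<close> by (simp add: Bcontfun_inverse)
  have "dist (\<Psi> h1) (\<Psi> h2) \<le> 1/2 * dist h1 h2" for h1 h2
  proof (rule dist_bound)
    fix t
    have "dist (\<Psi> h1 t) (\<Psi> h2 t)
        = exp (- g * c t) * norm (integral {0..c t} (k h1) - integral {0..c t} (k h2))"
      unfolding \<Psi> P_def dist_norm by (simp flip: scaleR_diff_right)
    also have "\<dots> \<le> dist h1 h2 / 2"
      unfolding k_def
      by (rule exp_weighted_integral_diff_le[OF lip g_def])
        (use c(1)[of t] in \<open>auto intro: dist_bounded continuous_on_subset[OF continuous_on_apply_bcontfun]\<close>)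
    finally show "dist (\<Psi> h1 t) (\<Psi> h2 t) \<le> 1/2 * dist h1 h2" by simp
  qed
  then obtain h where h: "\<Psi> h = h"
    using banach_fix_type[of "1/2" \<Psi>] by auto
  define f where "f t = exp (g * c t) *\<^sub>R apply_bcontfun h t" for t
  have "continuous_on UNIV f"
    unfolding f_def c_def by (intro continuous_intros continuous_on_apply_bcontfun)
  moreover have "f t = x0 + integral {0..t} (\<lambda>s. G (f s))" if t: "t \<in> {0..T}" for t
  proof -
    have "f t = exp (g * t) *\<^sub>R P h t" using h \<Psi>[of h] t by (simp add: f_def c)
    also have "\<dots> = x0 + integral {0..t} (k h)" using t by (simp add: P_def c exp_minus)
    also have "integral {0..t} (k h) = integral {0..t} (\<lambda>s. G (f s))"
      by (rule integral_cong) (use t in \<open>simp add: k_def f_def c\<close>)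
    finally show ?thesis .
  qed
  ultimately show ?thesis by blast
qed

lemma lipschitz_ode_exists:
  fixes G :: "'a::euclidean_space \<Rightarrow> 'a" and T :: real
  assumes "L-lipschitz_on UNIV G" and "bounded (range G)" and "0 \<le> T"
  shows "\<exists>f. f 0 = x0 \<and> continuous_on {0..T} f \<and>
     (\<forall>t\<in>{0..T}. (f has_vector_derivative G (f t)) (at t within {0..T}))"
proof -
  obtain f where contf: "continuous_on UNIV f"
    and f: "\<forall>t\<in>{0..T}. f t = x0 + integral {0..t} (\<lambda>s. G (f s))"
    using lipschitz_integral_equation_solvable[OF assms] by blast
  have contG: "continuous_on UNIV G"
    by (rule lipschitz_on_continuous_on[OF assms(1)])
  show ?thesis
  proof (intro exI conjI ballI)
    show "f 0 = x0" using f \<open>0 \<le> T\<close> by simp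
    show "continuous_on {0..T} f" using contf by (rule continuous_on_subset) simp
    thus "(f has_vector_derivative G (f t)) (at t within {0..T})" if "t \<in> {0..T}" for t
      using contG that f by (intro integral_equation_imp_has_vector_derivative) auto
  qed
qed

lemma continuous_stays_in_closed:
  fixes f :: "real \<Rightarrow> 'a::metric_space"
  assumes "0 \<le> T" "continuous_on {0..T} f" "closed R" "f 0 \<in> R"
    and step: "\<And>s. s \<in> {0..<T} \<Longrightarrow> f ` {0..s} \<subseteq> R \<Longrightarrow> \<exists>\<delta>>0. \<forall>u\<in>{s..T}. u < s + \<delta> \<longrightarrow> f u \<in> R"
  shows "f ` {0..T} \<subseteq> R"
proof -
  define S where "S = {s \<in> {0..T}. f ` {0..s} \<subseteq> R}"
  define s0 where "s0 = Sup S"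
  have "0 \<in> S" using assms(1,4) by (auto simp: S_def)
  have "bdd_above S" by (rule bdd_aboveI[of _ T]) (auto simp: S_def)
  have "0 \<le> s0" unfolding s0_def by (rule cSup_upper[OF \<open>0 \<in> S\<close> \<open>bdd_above S\<close>])
  moreover have "s0 \<le> T" unfolding s0_def using \<open>0 \<in> S\<close> by (intro cSup_least) (auto simp: S_def)
  ultimately have s0: "0 \<le> s0" "s0 \<le> T" .
  have "f ` {0..<s0} \<subseteq> R"
  proof
    fix y assume "y \<in> f ` {0..<s0}"
    then obtain u where u: "u \<in> {0..<s0}" "y = f u" by blast
    then obtain s where "s \<in> S" "u < s" using less_cSupE[of u S] \<open>0 \<in> S\<close> by (auto simp: s0_def)
    thus "y \<in> R" using u by (auto simp: S_def)
  qed
  hence "f ` {0..s0} \<subseteq> R"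
  proof (cases "s0 = 0")
    case False
    hence "closure {0..<s0} = {0..s0}" using s0 by simp
    moreover have "continuous_on {0..s0} f" using assms(2) by (rule continuous_on_subset) (use s0 in auto)
    ultimately show ?thesis
      using image_closure_subset[of "{0..<s0}" f R] \<open>f ` {0..<s0} \<subseteq> R\<close> assms(3) by metis
  qed (use assms(4) in auto)
  moreover have "s0 = T"
  proof (rule ccontr)
    assume "s0 \<noteq> T"
    with s0 \<open>f ` {0..s0} \<subseteq> R\<close> obtain \<delta> where "\<delta> > 0" and \<delta>: "\<forall>u\<in>{s0..T}. u < s0 + \<delta> \<longrightarrow> f u \<in> R"
      using step[of s0] by auto
    define s' where "s' = min T (s0 + \<delta> / 2)"
    have "f u \<in> R" if u: "u \<in> {0..s'}" for u
    proof (cases "u \<le> s0")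
      case True thus ?thesis using u \<open>f ` {0..s0} \<subseteq> R\<close> by auto
    next
      case False thus ?thesis using u \<delta> \<open>\<delta> > 0\<close> by (auto simp: s'_def)
    qed
    moreover have "s' \<in> {0..T}" using s0 \<open>\<delta> > 0\<close> by (auto simp: s'_def)
    ultimately have "s' \<in> S" by (auto simp: S_def)
    hence "s' \<le> s0" unfolding s0_def using \<open>bdd_above S\<close> by (rule cSup_upper)
    thus False using s0 \<open>s0 \<noteq> T\<close> \<open>\<delta> > 0\<close> by (auto simp: s'_def)
  qed
  ultimately show ?thesis by simp
qed

lemma truncated_lipschitz_ode_exists:
  fixes F :: "'a::euclidean_space \<Rightarrow> 'a"
  assumes "convex R" "closed R" "bounded R" "x0 \<in> R" "L-lipschitz_on R F" "0 \<le> T"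
  shows "\<exists>f. f 0 = x0 \<and> continuous_on {0..T} f \<and>
     (\<forall>t\<in>{0..T}. (f has_vector_derivative F (closest_point R (f t))) (at t within {0..T}))"
proof (rule lipschitz_ode_exists)
  have "1-lipschitz_on UNIV (closest_point R)"
    using closest_point_lipschitz[OF assms(1,2)] assms(4) by (intro lipschitz_onI) auto
  thus "(L * 1)-lipschitz_on UNIV (\<lambda>x. F (closest_point R x))"
    by (rule lipschitz_on_compose2) (use assms(5) closest_point_in_set[OF assms(2)] assms(4) in
        \<open>auto intro: lipschitz_on_subset\<close>)
  have "bounded (F ` R)"
    by (rule bounded_uniformly_continuous_image[OF lipschitz_on_uniformly_continuous[OF assms(5)] assms(3)])
  moreover have "range (\<lambda>x. F (closest_point R x)) \<subseteq> F ` R"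
    using closest_point_in_set[OF assms(2)] assms(4) by blast
  ultimately show "bounded (range (\<lambda>x. F (closest_point R x)))"
    by (rule bounded_subset)
qed (rule assms(6))

section \<open>The vector field of the system\<close>

definition ode_field ::
  "real \<Rightarrow> real^'n^'n \<Rightarrow> (real^'n^'k) \<times> (real^'k^'k) \<Rightarrow> (real^'n^'k) \<times> (real^'k^'k)" where
  "ode_field \<tau> A x =
     (2 *\<^sub>R (matrix_inv (snd x) ** fst x ** A - fst x),
      (1 / \<tau>) *\<^sub>R (matrix_inv (snd x) ** fst x ** A ** transpose (fst x) ** matrix_inv (snd x) - snd x))"

definition ode_solution_on ::
  "real \<Rightarrow> real^'n^'n \<Rightarrow> (real^'n^'k) \<times> (real^'k^'k) \<Rightarrow> real
    \<Rightarrow> (real \<Rightarrow> (real^'n^'k) \<times> (real^'k^'k)) \<Rightarrow> bool" where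
  "ode_solution_on \<tau> A x0 T x \<longleftrightarrow> x 0 = x0 \<and>
     (\<forall>t\<in>{0..T}. sym_posdef (snd (x t)) \<and>
        (x has_vector_derivative ode_field \<tau> A (x t)) (at t within {0..T}))"

definition ode_region :: "real \<Rightarrow> real \<Rightarrow> real \<Rightarrow> ((real^'n^'k) \<times> (real^'k^'k)) set" where
  "ode_region c bw bm = {x. sym_coercive c (snd x) \<and> norm (fst x) \<le> bw \<and> norm (snd x) \<le> bm}"

lemma ode_solution_on_subset:
  assumes "ode_solution_on \<tau> A x0 T x" "S \<le> T"
  shows "ode_solution_on \<tau> A x0 S x"
proof -
  have "(x has_vector_derivative ode_field \<tau> A (x t)) (at t within {0..S})" if "t \<in> {0..S}" for t
  proof -
    have "(x has_vector_derivative ode_field \<tau> A (x t)) (at t within {0..T})"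
      using assms that unfolding ode_solution_on_def by auto
    thus ?thesis by (rule has_vector_derivative_within_subset) (use assms(2) in auto)
  qed
  thus ?thesis using assms unfolding ode_solution_on_def by auto
qed

lemma ode_region_eq:
  "ode_region c bw bm = snd -` {M. sym_coercive c M} \<inter> fst -` cball 0 bw \<inter> snd -` cball 0 bm"
  by (auto simp: ode_region_def)

lemma convex_ode_region: "convex (ode_region c bw bm)"
  unfolding ode_region_eq
  by (intro convex_Int convex_linear_vimage convex_sym_coercive convex_cball linear_fst linear_snd)

lemma closed_ode_region: "closed (ode_region c bw bm)"
  unfolding ode_region_eq
  by (intro closed_Int continuous_closed_vimage closed_sym_coercive closed_cball continuous_intros)

lemma bounded_ode_region: "bounded (ode_region c bw bm)"
proof -
  have "norm x \<le> bw + bm" if "x \<in> ode_region c bw bm" for x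
    using that norm_Pair_le[of "fst x" "snd x"] by (auto simp: ode_region_def)
  thus ?thesis unfolding bounded_iff by blast
qed

lemma lipschitz_on_ode_field:
  fixes A :: "real^'n^'n"
  assumes "c > 0"
  shows "\<exists>L. L-lipschitz_on (ode_region c bw bm :: ((real^'n^'k) \<times> (real^'k^'k)) set) (ode_field \<tau> A)"
proof -
  let ?R = "ode_region c bw bm :: ((real^'n^'k) \<times> (real^'k^'k)) set"
  note R = bounded_ode_region[of c bw bm]
  have W: "1-lipschitz_on ?R fst" and M: "1-lipschitz_on ?R snd"
    by (intro lipschitz_onI; simp add: dist_fst_le dist_snd_le)+
  have Wt: "1-lipschitz_on ?R (\<lambda>x. transpose (fst x))"
    using W unfolding lipschitz_on_def by (simp add: dist_norm norm_transpose flip: transpose_diff)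
  have "((sqrt CARD('k) / c)^2)-lipschitz_on (snd ` ?R) matrix_inv"
    by (rule lipschitz_on_subset[OF lipschitz_on_matrix_inv[OF assms]]) (auto simp: ode_region_def)
  with M have P: "((sqrt CARD('k) / c)^2 * 1)-lipschitz_on ?R (\<lambda>x. matrix_inv (snd x))"
    by (rule lipschitz_on_compose2)
  then obtain L1 where "L1-lipschitz_on ?R (\<lambda>x. matrix_inv (snd x) ** fst x)"
    using lipschitz_on_matrix_mult[OF R _ W] by blast
  then obtain L2 where L2: "L2-lipschitz_on ?R (\<lambda>x. matrix_inv (snd x) ** fst x ** A)"
    using lipschitz_on_matrix_mult[OF R _ lipschitz_on_constant] by blast
  then obtain L3 where "L3-lipschitz_on ?R (\<lambda>x. matrix_inv (snd x) ** fst x ** A ** transpose (fst x))"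
    using lipschitz_on_matrix_mult[OF R _ Wt] by blast
  then obtain L4 where L4:
    "L4-lipschitz_on ?R (\<lambda>x. matrix_inv (snd x) ** fst x ** A ** transpose (fst x) ** matrix_inv (snd x))"
    using lipschitz_on_matrix_mult[OF R _ P] by blast
  show ?thesis
    unfolding ode_field_def[abs_def]
    by (rule exI lipschitz_on_Pair lipschitz_on_cmult lipschitz_on_diff L2 L4 W M)+
qed

lemma transpose_snd_ode_field:
  assumes "transpose A = A" "c > 0" "sym_coercive c (snd x)"
  shows "transpose (snd (ode_field \<tau> A x)) = snd (ode_field \<tau> A x)"
  using assms sym_coercive_transpose_matrix_inv[OF assms(2,3)]
  by (simp add: ode_field_def transpose_scalar transpose_diff sym_coercive_def
      matrix_transpose_mul matrix_mul_assoc)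

lemma ode_region_margin:
  assumes "x \<in> ode_region c bw bm" "transpose (snd y) = snd y" "norm (y - x) \<le> min 1 (c / 2)"
  shows "y \<in> ode_region (c / 2) (bw + 1) (bm + 1)"
proof -
  have "norm (fst y - fst x) \<le> norm (y - x)" "norm (snd y - snd x) \<le> norm (y - x)"
    using norm_fst_le[of "fst (y - x)" "snd (y - x)", unfolded prod.collapse]
      norm_snd_le[of "snd (y - x)" "fst (y - x)", unfolded prod.collapse] by simp_all
  hence W: "norm (fst y - fst x) \<le> min 1 (c / 2)" and M: "norm (snd y - snd x) \<le> min 1 (c / 2)"
    using assms(3) by auto
  have "norm (fst y) \<le> bw + 1" "norm (snd y) \<le> bm + 1"
    using assms(1) W M norm_triangle_ineq2[of "fst y" "fst x"] norm_triangle_ineq2[of "snd y" "snd x"]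
    by (auto simp: ode_region_def)
  moreover have "sym_coercive (c / 2) (snd y)"
    using assms(1,2) M by (intro sym_coercive_perturb[of c "snd x"]) (auto simp: ode_region_def)
  ultimately show ?thesis by (simp add: ode_region_def)
qed

lemma is_solution_imp_ode_solution_on:
  assumes sol: "is_solution \<tau> A W0 M0 W M" and "\<tau> \<noteq> 0"
  shows "ode_solution_on \<tau> A (W0, M0) T (\<lambda>t. (W t, M t))"
proof -
  obtain W' M' where WM: "\<forall>t\<ge>0. (W has_vector_derivative W' t) (at t within {0..}) \<and>
      (M has_vector_derivative M' t) (at t within {0..}) \<and>
      (1/2) *\<^sub>R W' t = matrix_inv (M t) ** W t ** A - W t \<and>
      \<tau> *\<^sub>R M' t = matrix_inv (M t) ** W t ** A ** transpose (W t) ** matrix_inv (M t) - M t"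
    using sol unfolding is_solution_def by blast
  have "((\<lambda>t. (W t, M t)) has_vector_derivative ode_field \<tau> A (W t, M t)) (at t within {0..T})"
    if "t \<in> {0..T}" for t
  proof -
    have eqs: "(1/2) *\<^sub>R W' t = matrix_inv (M t) ** W t ** A - W t"
      "\<tau> *\<^sub>R M' t = matrix_inv (M t) ** W t ** A ** transpose (W t) ** matrix_inv (M t) - M t"
      using WM that by auto
    have "W' t = 2 *\<^sub>R ((1/2) *\<^sub>R W' t)" "M' t = (1 / \<tau>) *\<^sub>R (\<tau> *\<^sub>R M' t)"
      using \<open>\<tau> \<noteq> 0\<close> by simp_all
    hence "(W' t, M' t) = ode_field \<tau> A (W t, M t)"
      unfolding eqs by (simp add: ode_field_def)
    moreover have "((\<lambda>t. (W t, M t)) has_vector_derivative (W' t, M' t)) (at t within {0..})"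
      using WM that by (intro has_vector_derivative_Pair) auto
    ultimately show ?thesis
      by (auto elim: has_vector_derivative_within_subset)
  qed
  thus ?thesis using sol by (simp add: ode_solution_on_def is_solution_def)
qed

section \<open>A priori bounds\<close>

locale wm_system =
  fixes A :: "real^'n^'n" and \<tau> :: real and W0 :: "real^'n^'k" and M0 :: "real^'k^'k"
  assumes A: "sym_posdef A" and \<tau>: "\<tau> > 0" and M0: "sym_posdef M0"
begin

abbreviation solution_on :: "real \<Rightarrow> (real \<Rightarrow> (real^'n^'k) \<times> (real^'k^'k)) \<Rightarrow> bool" where
  "solution_on \<equiv> ode_solution_on \<tau> A (W0, M0)"

definition "c0 = (SOME c. c > 0 \<and> sym_coercive c M0)"
definition "m_low T = exp (- T / \<tau>) * c0"
definition "inv_bound T = sqrt CARD('k) / m_low T"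
definition "w_bound T = exp (2 * inv_bound T * norm A * T) * norm W0"
definition "q_bound T = inv_bound T ^ 2 * w_bound T ^ 2 * norm A"
definition "m_bound T = sqrt (norm M0 ^ 2 + q_bound T ^ 2 * T / \<tau>)"

lemma c0: "c0 > 0" "sym_coercive c0 M0"
  using someI_ex[OF sym_posdef_imp_sym_coercive[OF M0]] unfolding c0_def by auto

lemma m_low_pos: "m_low T > 0"
  using c0 by (simp add: m_low_def)

lemma solution_derivative:
  "solution_on t x \<Longrightarrow> s \<in> {0..t} \<Longrightarrow> (x has_vector_derivative ode_field \<tau> A (x s)) (at s within {0..t})"
  unfolding ode_solution_on_def by auto

lemma solution_sym_posdef: "solution_on T x \<Longrightarrow> t \<in> {0..T} \<Longrightarrow> sym_posdef (snd (x t))"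
  unfolding ode_solution_on_def by auto

lemma solution_coercive:
  assumes sol: "solution_on t x" and t: "0 \<le> t" "t \<le> T"
  shows "sym_coercive (m_low T) (snd (x t))"
proof -
  have "m_low T * norm v ^ 2 \<le> v \<bullet> (snd (x t) *v v)" for v
  proof -
    define g where "g u = v \<bullet> (snd (x u) *v v)" for u
    have g': "((\<lambda>u. - g u) has_real_derivative - (v \<bullet> (snd (ode_field \<tau> A (x u)) *v v))) (at u within {0..t})"
      if "u \<in> {0..t}" for u
      unfolding g_def
      by (intro DERIV_minus bounded_linear.has_vector_derivative[OF bounded_linear_quadratic_form,
            THEN iffD2[OF has_real_derivative_iff_has_vector_derivative]]
            bounded_linear.has_vector_derivative[OF bounded_linear_snd] solution_derivative[OF sol that])
    have g'_bound: "- (v \<bullet> (snd (ode_field \<tau> A (x u)) *v v)) \<le> (- 1 / \<tau>) * - g u" if "u \<in> {0..t}" for u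
    proof -
      let ?P = "matrix_inv (snd (x u))" and ?W = "fst (x u)"
      have "transpose ?P = ?P"
        using sol that by (auto simp: ode_solution_on_def intro: sym_posdef_transpose_matrix_inv)
      hence "?P ** ?W ** A ** transpose ?W ** ?P = (?P ** ?W) ** A ** transpose (?P ** ?W)"
        by (simp add: matrix_transpose_mul matrix_mul_assoc)
      hence "0 \<le> v \<bullet> ((?P ** ?W ** A ** transpose ?W ** ?P) *v v)"
        using quadratic_form_congruence_nonneg[OF A] by simp
      thus ?thesis using \<tau>
        by (simp add: g_def ode_field_def scaleR_matrix_vector_assoc[symmetric]
            matrix_vector_mult_diff_rdistrib inner_diff_right field_simps)
    qed
    have "- g t \<le> exp (- 1 / \<tau> * t) * - g 0"
      using t(1) g' g'_bound by (rule gronwall_exp_bound)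
    hence "exp (- t / \<tau>) * g 0 \<le> g t" by simp
    have "m_low T * norm v ^ 2 \<le> exp (- t / \<tau>) * (c0 * norm v ^ 2)"
      unfolding m_low_def mult.assoc using t \<tau> c0(1) by (intro mult_right_mono) (auto simp: divide_right_mono)
    also have "\<dots> \<le> exp (- t / \<tau>) * g 0"
      using c0(2) sol unfolding g_def sym_coercive_def ode_solution_on_def by simp
    also have "\<dots> \<le> g t" by fact
    finally show ?thesis by (simp add: g_def)
  qed
  moreover have "transpose (snd (x t)) = snd (x t)"
    using sol t unfolding ode_solution_on_def sym_posdef_def by auto
  ultimately show ?thesis unfolding sym_coercive_def by auto
qed

lemma inv_bound_nonneg: "inv_bound T \<ge> 0"
  using m_low_pos[of T] by (simp add: inv_bound_def)

lemma solution_norm_matrix_inv: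
  assumes "solution_on t x" "0 \<le> t" "t \<le> T"
  shows "norm (matrix_inv (snd (x t))) \<le> inv_bound T"
  using norm_matrix_inv_le[OF m_low_pos solution_coercive[OF assms]] by (simp add: inv_bound_def)

lemma solution_norm_fst:
  assumes sol: "solution_on t x" and t: "0 \<le> t" "t \<le> T"
  shows "norm (fst (x t)) \<le> w_bound T"
proof -
  define a where "a = 4 * inv_bound T * norm A"
  have "a \<ge> 0" using inv_bound_nonneg by (simp add: a_def)
  define f where "f u = norm (fst (x u)) ^ 2" for u
  have f': "(f has_real_derivative 2 * (fst (x u) \<bullet> fst (ode_field \<tau> A (x u)))) (at u within {0..t})"
    if "u \<in> {0..t}" for u
    unfolding f_def
    by (intro has_real_derivative_norm_sq bounded_linear.has_vector_derivative[OF bounded_linear_fst]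
        solution_derivative[OF sol that])
  have growth: "2 * (fst (x u) \<bullet> fst (ode_field \<tau> A (x u))) \<le> a * f u" if u: "u \<in> {0..t}" for u
  proof -
    let ?W = "fst (x u)" and ?P = "matrix_inv (snd (x u))"
    have "norm ?P \<le> inv_bound T"
      using u t by (intro solution_norm_matrix_inv ode_solution_on_subset[OF sol]) auto
    hence "norm (?P ** ?W ** A) \<le> inv_bound T * norm ?W * norm A"
      by (meson norm_matrix_mult_le mult_right_mono norm_ge_zero order_trans)
    hence "?W \<bullet> (?P ** ?W ** A) \<le> inv_bound T * norm A * norm ?W ^ 2"
      using norm_cauchy_schwarz[of ?W "?P ** ?W ** A"]
      by (smt (verit) mult.commute mult.left_commute mult_left_mono norm_ge_zero power2_eq_square)
    have "2 * (?W \<bullet> fst (ode_field \<tau> A (x u))) = 4 * (?W \<bullet> (?P ** ?W ** A)) - 4 * norm ?W ^ 2"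
      by (simp add: ode_field_def inner_diff_right power2_norm_eq_inner)
    also have "\<dots> \<le> 4 * (inv_bound T * norm A * norm ?W ^ 2) - 0"
      using \<open>?W \<bullet> (?P ** ?W ** A) \<le> _\<close> by (intro diff_mono) auto
    also have "\<dots> = a * f u" by (simp add: a_def f_def)
    finally show ?thesis .
  qed
  have "f t \<le> exp (a * t) * f 0"
    using t(1) f' growth by (rule gronwall_exp_bound)
  also have "\<dots> \<le> exp (a * T) * norm W0 ^ 2"
    using sol t \<open>a \<ge> 0\<close> by (auto simp: f_def ode_solution_on_def intro!: mult_right_mono mult_left_mono)
  also have "\<dots> = w_bound T ^ 2"
    by (simp add: w_bound_def a_def power_mult_distrib power2_eq_square exp_add[symmetric])
  finally show ?thesis
    unfolding f_def by (rule power2_le_imp_le) (simp add: w_bound_def)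
qed

lemma solution_norm_sandwich:
  assumes "solution_on t x" "0 \<le> t" "t \<le> T"
  shows "norm (matrix_inv (snd (x t)) ** fst (x t) ** A ** transpose (fst (x t)) ** matrix_inv (snd (x t)))
    \<le> q_bound T"
proof -
  have "norm (matrix_inv (snd (x t))) ^ 2 * norm (fst (x t)) ^ 2 \<le> inv_bound T ^ 2 * w_bound T ^ 2"
    using solution_norm_matrix_inv[OF assms] solution_norm_fst[OF assms]
    by (intro mult_mono power_mono) auto
  thus ?thesis
    using norm_sandwich_le[of "matrix_inv (snd (x t))" "fst (x t)" A]
    by (smt (verit) mult_right_mono norm_ge_zero q_bound_def)
qed

lemma solution_norm_snd:
  assumes sol: "solution_on t x" and t: "0 \<le> t" "t \<le> T"
  shows "norm (snd (x t)) \<le> m_bound T"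
proof -
  define q where "q = q_bound T"
  define f where "f u = norm (snd (x u)) ^ 2 - q ^ 2 / \<tau> * u" for u
  define f' where "f' u = 2 * (snd (x u) \<bullet> snd (ode_field \<tau> A (x u))) - q ^ 2 / \<tau>" for u
  have "(f has_real_derivative f' u) (at u within {0..t})" if "u \<in> {0..t}" for u
    unfolding f_def f'_def
    by (intro derivative_intros has_real_derivative_norm_sq bounded_linear.has_vector_derivative[OF bounded_linear_snd]
        solution_derivative[OF sol that] DERIV_cmult_Id)
  moreover have "f' u \<le> 0" if u: "u \<in> {0..t}" for u
  proof -
    let ?M = "snd (x u)"
    let ?Q = "matrix_inv ?M ** fst (x u) ** A ** transpose (fst (x u)) ** matrix_inv ?M"
    have "norm ?Q \<le> q"
      unfolding q_def using u t by (intro solution_norm_sandwich ode_solution_on_subset[OF sol]) auto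
    hence "?M \<bullet> ?Q \<le> norm ?M * q"
      by (meson mult_left_mono norm_cauchy_schwarz norm_ge_zero order_trans)
    moreover have "2 * (norm ?M * q) \<le> norm ?M ^ 2 + q ^ 2"
      using sum_squares_bound[of "norm ?M" q] by (simp add: mult.assoc)
    ultimately have "2 * (?M \<bullet> ?Q) - 2 * norm ?M ^ 2 - q ^ 2 \<le> 0"
      using zero_le_power2[of "norm ?M"] by linarith
    moreover have "f' u = (2 * (?M \<bullet> ?Q) - 2 * norm ?M ^ 2 - q ^ 2) / \<tau>"
      using \<tau> by (simp add: f'_def ode_field_def inner_diff_right power2_norm_eq_inner diff_divide_distrib)
    ultimately show ?thesis
      using \<tau> by (simp add: divide_nonpos_pos)
  qed
  ultimately have "f t \<le> f 0"
    using t(1) by (metis nonpos_derivative_imp_le)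
  hence "norm (snd (x t)) ^ 2 \<le> norm M0 ^ 2 + q ^ 2 * t / \<tau>"
    using sol by (simp add: f_def ode_solution_on_def)
  also have "\<dots> \<le> norm M0 ^ 2 + q ^ 2 * T / \<tau>"
    using t \<tau> by (simp add: divide_right_mono mult_left_mono)
  finally show ?thesis
    unfolding m_bound_def q_def by (rule real_le_rsqrt)
qed

lemma solution_within_bounds:
  assumes "solution_on t x" "0 \<le> t" "t \<le> T"
  shows "x t \<in> ode_region (m_low T) (w_bound T) (m_bound T)"
  using solution_coercive[OF assms] solution_norm_fst[OF assms] solution_norm_snd[OF assms]
  by (simp add: ode_region_def)

section \<open>Existence and uniqueness\<close>

text \<open>The margin makes \<open>region T\<close> contain every symmetric state close to one that a solution
  on \<open>[0, T]\<close> can reach.\<close>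

definition region :: "real \<Rightarrow> ((real^'n^'k) \<times> (real^'k^'k)) set" where
  "region T = ode_region (m_low T / 2) (w_bound T + 1) (m_bound T + 1)"

lemma lipschitz_on_region: "\<exists>L. L-lipschitz_on (region T) (ode_field \<tau> A)"
  unfolding region_def using m_low_pos[of T] by (intro lipschitz_on_ode_field) simp

lemma solution_in_region:
  assumes "solution_on t x" "0 \<le> t" "t \<le> T"
  shows "x t \<in> region T"
  unfolding region_def using solution_within_bounds[OF assms] m_low_pos[of T]
  by (intro ode_region_margin[of "x t"]) (auto simp: ode_region_def sym_coercive_def)

lemma initial_in_region:
  assumes "0 \<le> T"
  shows "(W0, M0) \<in> region T"
proof -
  have "exp (- T / \<tau>) \<le> 1" using assms \<tau> by simp
  hence "m_low T \<le> c0"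
    unfolding m_low_def by (rule mult_left_le_one_le[rotated 2]) (use c0(1) in auto)
  hence "m_low T / 2 \<le> c0"
    using m_low_pos[of T] by linarith
  moreover have "1 \<le> exp (2 * inv_bound T * norm A * T)"
    using assms inv_bound_nonneg[of T] by simp
  hence "norm W0 \<le> w_bound T"
    unfolding w_bound_def by (simp add: mult_le_cancel_right1)
  moreover have "norm M0 \<le> m_bound T"
    unfolding m_bound_def using assms \<tau> by (intro real_le_rsqrt) simp
  ultimately show ?thesis
    using c0(2) by (auto simp: region_def ode_region_def intro: sym_coercive_mono)
qed

lemma solution_unique:
  assumes x: "solution_on T x" and y: "solution_on T y" and t: "t \<in> {0..T}"
  shows "x t = y t"
proof -
  obtain L where L: "L-lipschitz_on (region T) (ode_field \<tau> A)"
    using lipschitz_on_region by blast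
  have xy: "solution_on t x" "solution_on t y"
    using x y t by (auto intro: ode_solution_on_subset)
  define d where "d s = norm (x s - y s) ^ 2" for s
  define d' where "d' s = 2 * ((x s - y s) \<bullet> (ode_field \<tau> A (x s) - ode_field \<tau> A (y s)))" for s
  have d': "(d has_real_derivative d' s) (at s within {0..t})" if "s \<in> {0..t}" for s
    unfolding d_def d'_def
    by (intro has_real_derivative_norm_sq has_vector_derivative_diff solution_derivative[OF xy(1) that]
        solution_derivative[OF xy(2) that])
  have growth: "d' s \<le> 2 * L * d s" if s: "s \<in> {0..t}" for s
  proof -
    have "x s \<in> region T" "y s \<in> region T"
      by (rule solution_in_region[OF ode_solution_on_subset[OF x]]
          solution_in_region[OF ode_solution_on_subset[OF y]]; use s t in simp)+
    hence "norm (ode_field \<tau> A (x s) - ode_field \<tau> A (y s)) \<le> L * norm (x s - y s)"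
      using lipschitz_onD[OF L] by (simp add: dist_norm)
    hence "(x s - y s) \<bullet> (ode_field \<tau> A (x s) - ode_field \<tau> A (y s)) \<le> norm (x s - y s) * (L * norm (x s - y s))"
      by (meson mult_left_mono norm_cauchy_schwarz norm_ge_zero order_trans)
    thus ?thesis by (simp add: d_def d'_def power2_eq_square ac_simps)
  qed
  have "d t \<le> exp (2 * L * t) * d 0"
    using _ d' growth by (rule gronwall_exp_bound) (use t in auto)
  moreover have "d 0 = 0" using x y by (simp add: d_def ode_solution_on_def)
  ultimately show ?thesis by (simp add: d_def)
qed

lemma truncated_solution_on:
  assumes f0: "f 0 = (W0, M0)" and "s \<le> T"
    and f': "\<forall>t\<in>{0..T}. (f has_vector_derivative ode_field \<tau> A (closest_point (region T) (f t))) (at t within {0..T})"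
    and in_region: "f ` {0..s} \<subseteq> region T"
  shows "solution_on s f"
  unfolding ode_solution_on_def
proof (intro conjI ballI f0)
  fix t assume t: "t \<in> {0..s}"
  hence "f t \<in> region T" using in_region by auto
  thus "sym_posdef (snd (f t))"
    using m_low_pos[of T] by (intro sym_coercive_imp_sym_posdef[of "m_low T / 2"]) (auto simp: region_def ode_region_def)
  have "(f has_vector_derivative ode_field \<tau> A (f t)) (at t within {0..T})"
    using f'[rule_format, of t] t \<open>s \<le> T\<close> closest_point_self[OF \<open>f t \<in> region T\<close>] by auto
  thus "(f has_vector_derivative ode_field \<tau> A (f t)) (at t within {0..s})"
    by (rule has_vector_derivative_within_subset) (use \<open>s \<le> T\<close> in auto)
qed

lemma closed_region: "closed (region T)" and convex_region: "convex (region T)"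
  and bounded_region: "bounded (region T)"
  by (simp_all add: region_def closed_ode_region convex_ode_region bounded_ode_region)

lemma truncated_solution_symmetric:
  assumes f0: "f 0 = (W0, M0)"
    and f': "\<forall>t\<in>{0..T}. (f has_vector_derivative ode_field \<tau> A (closest_point (region T) (f t))) (at t within {0..T})"
    and t: "t \<in> {0..T}"
  shows "transpose (snd (f t)) = snd (f t)"
proof (rule symmetric_if_derivative_symmetric[OF t])
  fix s assume s: "s \<in> {0..T}"
  let ?x = "closest_point (region T) (f s)"
  show "((\<lambda>t. snd (f t)) has_vector_derivative snd (ode_field \<tau> A ?x)) (at s within {0..T})"
    using f' s by (auto intro: bounded_linear.has_vector_derivative[OF bounded_linear_snd])
  have "region T \<noteq> {}" using initial_in_region[of T] t by auto
  hence "?x \<in> region T" by (rule closest_point_in_set[OF closed_region])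
  thus "transpose (snd (ode_field \<tau> A ?x)) = snd (ode_field \<tau> A ?x)"
    using A m_low_pos[of T]
    by (intro transpose_snd_ode_field[of _ "m_low T / 2"]) (auto simp: region_def ode_region_def sym_posdef_def)
qed (use f0 M0 in \<open>simp add: sym_posdef_def\<close>)

lemma truncated_solution_in_region:
  assumes f0: "f 0 = (W0, M0)" and contf: "continuous_on {0..T} f"
    and f': "\<forall>t\<in>{0..T}. (f has_vector_derivative ode_field \<tau> A (closest_point (region T) (f t))) (at t within {0..T})"
    and "0 \<le> T"
  shows "f ` {0..T} \<subseteq> region T"
proof (rule continuous_stays_in_closed[OF \<open>0 \<le> T\<close> contf closed_region])
  show "f 0 \<in> region T" using initial_in_region[OF \<open>0 \<le> T\<close>] f0 by simp
  fix s assume s: "s \<in> {0..<T}" "f ` {0..s} \<subseteq> region T"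
  have fs: "f s \<in> ode_region (m_low T) (w_bound T) (m_bound T)"
    using s by (intro solution_within_bounds truncated_solution_on[OF f0 _ f']) auto
  have "s \<in> {0..T}" "min 1 (m_low T / 2) > 0" using s m_low_pos[of T] by auto
  then obtain \<delta> where "\<delta> > 0" and \<delta>: "\<forall>u\<in>{0..T}. dist u s < \<delta> \<longrightarrow> dist (f u) (f s) < min 1 (m_low T / 2)"
    using contf unfolding continuous_on_iff by blast
  have "f u \<in> region T" if u: "u \<in> {s..T}" "u < s + \<delta>" for u
  proof -
    have "u \<in> {0..T}" "dist u s < \<delta>" using u s by (auto simp: dist_real_def)
    hence "norm (f u - f s) \<le> min 1 (m_low T / 2)"
      using \<delta> by (auto simp: dist_norm)
    thus ?thesis
      unfolding region_def
      by (rule ode_region_margin[OF fs truncated_solution_symmetric[OF f0 f' \<open>u \<in> {0..T}\<close>]])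
  qed
  thus "\<exists>\<delta>>0. \<forall>u\<in>{s..T}. u < s + \<delta> \<longrightarrow> f u \<in> region T" using \<open>\<delta> > 0\<close> by blast
qed

lemma solution_exists:
  assumes "0 \<le> T"
  shows "\<exists>x. solution_on T x"
proof -
  obtain L where "L-lipschitz_on (region T) (ode_field \<tau> A)"
    using lipschitz_on_region by blast
  then obtain f where f0: "f 0 = (W0, M0)" and contf: "continuous_on {0..T} f"
    and f': "\<forall>t\<in>{0..T}. (f has_vector_derivative ode_field \<tau> A (closest_point (region T) (f t))) (at t within {0..T})"
    using truncated_lipschitz_ode_exists[OF convex_region closed_region bounded_region
        initial_in_region[OF assms] _ assms] by blast
  thus ?thesis
    using truncated_solution_on[OF f0 order_refl f' truncated_solution_in_region[OF f0 contf f' assms]]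
    by blast
qed

definition local_solution :: "real \<Rightarrow> real \<Rightarrow> (real^'n^'k) \<times> (real^'k^'k)" where
  "local_solution T = (SOME x. solution_on T x)"

definition flow :: "real \<Rightarrow> (real^'n^'k) \<times> (real^'k^'k)" where
  "flow t = local_solution (t + 1) t"

lemma local_solution: "0 \<le> T \<Longrightarrow> solution_on T (local_solution T)"
  unfolding local_solution_def by (rule someI_ex[OF solution_exists])

lemma flow_eq_solution:
  assumes "solution_on T x" "t \<in> {0..T}"
  shows "flow t = x t"
  unfolding flow_def using assms
  by (intro solution_unique[of "min T (t + 1)"] ode_solution_on_subset[OF local_solution]
      ode_solution_on_subset[OF assms(1)]) auto

lemma flow_solution: "0 \<le> T \<Longrightarrow> solution_on T flow"
  using local_solution[of T] flow_eq_solution[OF local_solution[of T]]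
  unfolding ode_solution_on_def
  by (auto intro: has_vector_derivative_transform)

lemma solution_field_continuous:
  assumes "solution_on T x"
  shows "continuous_on {0..T} (\<lambda>t. ode_field \<tau> A (x t))"
proof -
  have "continuous_on {0..T} x"
    using assms unfolding ode_solution_on_def continuous_on_eq_continuous_within
    by (auto intro: has_vector_derivative_continuous)
  moreover obtain L where "L-lipschitz_on (region T) (ode_field \<tau> A)"
    using lipschitz_on_region by blast
  moreover have "x t \<in> region T" if "t \<in> {0..T}" for t
    by (rule solution_in_region[OF ode_solution_on_subset[OF assms]]) (use that in auto)
  hence "x ` {0..T} \<subseteq> region T" by blast
  ultimately show ?thesis
    by (metis continuous_on_compose2 lipschitz_on_continuous_on)
qed

lemma flow_is_solution: "is_solution \<tau> A W0 M0 (\<lambda>t. fst (flow t)) (\<lambda>t. snd (flow t))"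
proof -
  have at_eq: "at t within {0..t + 1} = at t within {0..}" if "t \<ge> 0" for t :: real
    by (rule at_within_nhd[of t "{..<t + 1}"]) (use that in auto)
  have flow': "(flow has_vector_derivative ode_field \<tau> A (flow t)) (at t within {0..})" if "t \<ge> 0" for t
  proof -
    have "solution_on (t + 1) flow" using that by (intro flow_solution) simp
    hence "(flow has_vector_derivative ode_field \<tau> A (flow t)) (at t within {0..t + 1})"
      by (rule solution_derivative) (use that in simp)
    thus ?thesis using at_eq[OF that] by simp
  qed
  have "continuous_on {0..} (\<lambda>t. ode_field \<tau> A (flow t))"
    unfolding continuous_on_eq_continuous_within
  proof
    fix t :: real assume "t \<in> {0..}"
    hence "t \<ge> 0" "t \<in> {0..t + 1}" by auto
    hence "continuous (at t within {0..t + 1}) (\<lambda>t. ode_field \<tau> A (flow t))"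
      using solution_field_continuous[OF flow_solution[of "t + 1"]]
      unfolding continuous_on_eq_continuous_within by simp
    thus "continuous (at t within {0..}) (\<lambda>t. ode_field \<tau> A (flow t))"
      using at_eq[OF \<open>t \<ge> 0\<close>] by simp
  qed
  then show ?thesis
    unfolding is_solution_def
  proof (intro conjI allI impI exI[of _ "\<lambda>t. fst (ode_field \<tau> A (flow t))"]
      exI[of _ "\<lambda>t. snd (ode_field \<tau> A (flow t))"] continuous_on_fst continuous_on_snd)
    show "fst (flow 0) = W0" "snd (flow 0) = M0"
      using flow_solution[of 0] by (simp_all add: ode_solution_on_def)
    fix t :: real assume "t \<ge> 0"
    show "sym_posdef (snd (flow t))"
      using \<open>t \<ge> 0\<close> by (intro solution_sym_posdef[OF flow_solution]) auto
    show "((\<lambda>t. fst (flow t)) has_vector_derivative fst (ode_field \<tau> A (flow t))) (at t within {0..})"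
      by (rule bounded_linear.has_vector_derivative[OF bounded_linear_fst flow'[OF \<open>t \<ge> 0\<close>]])
    show "((\<lambda>t. snd (flow t)) has_vector_derivative snd (ode_field \<tau> A (flow t))) (at t within {0..})"
      by (rule bounded_linear.has_vector_derivative[OF bounded_linear_snd flow'[OF \<open>t \<ge> 0\<close>]])
  qed (use \<tau> in \<open>simp_all add: ode_field_def\<close>)
qed

end

theorem theorem3:
  fixes A :: "real^'n^'n" and W0 :: "real^'n^'k" and M0 :: "real^'k^'k" and \<tau> :: real
  assumes "CARD('k) < CARD('n)"
    and "sym_posdef A"
    and "\<tau> > 0"
    and "sym_posdef M0"
  shows "\<exists>W M. is_solution \<tau> A W0 M0 W M \<and>
           (\<forall>W2 M2. is_solution \<tau> A W0 M0 W2 M2 \<longrightarrow> (\<forall>t\<ge>0. W2 t = W t \<and> M2 t = M t))"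
proof -
  interpret wm_system A \<tau> W0 M0 using assms by unfold_locales
  have "W2 t = fst (flow t) \<and> M2 t = snd (flow t)"
    if "is_solution \<tau> A W0 M0 W2 M2" "t \<ge> 0" for W2 M2 t
    using flow_eq_solution[OF is_solution_imp_ode_solution_on[OF that(1), of t], of t] \<tau> that(2) by auto
  thus ?thesis using flow_is_solution by blast
qed

end
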